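(* Let $R$ be a Noetherian ring and let $R_0$ be an elementary substructure of $R$ (in the language of rings). Then $R_0$ is Noetherian.
   Context: Rings are commutative and unital. *)

theory Defs
  imports "HOL-Algebra.Ring_Divisibility" "HOL-Algebra.Subrings"
begin

datatype rterm = RVar nat | RZero | ROne | RAdd rterm rterm | RNeg rterm | RMul rterm rterm

datatype rform = REq rterm rterm | RNot rform | RAnd rform rform | RExists nat rform

fun rterm_eval :: "('a, 'b) ring_scheme \<Rightarrow> (nat \<Rightarrow> 'a) \<Rightarrow> rterm \<Rightarrow> 'a" where
  "rterm_eval R e (RVar n) = e n"
| "rterm_eval R e RZero = \<zero>\<^bsub>R\<^esub>"
| "rterm_eval R e ROne = \<one>\<^bsub>R\<^esub>"
| "rterm_eval R e (RAdd s t) = rterm_eval R e s \<oplus>\<^bsub>R\<^esub> rterm_eval R e t"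
| "rterm_eval R e (RNeg s) = \<ominus>\<^bsub>R\<^esub> rterm_eval R e s"
| "rterm_eval R e (RMul s t) = rterm_eval R e s \<otimes>\<^bsub>R\<^esub> rterm_eval R e t"

fun rsat :: "('a, 'b) ring_scheme \<Rightarrow> (nat \<Rightarrow> 'a) \<Rightarrow> rform \<Rightarrow> bool" where
  "rsat R e (REq s t) = (rterm_eval R e s = rterm_eval R e t)"
| "rsat R e (RNot \<phi>) = (\<not> rsat R e \<phi>)"
| "rsat R e (RAnd \<phi> \<psi>) = (rsat R e \<phi> \<and> rsat R e \<psi>)"
| "rsat R e (RExists x \<phi>) = (\<exists>a\<in>carrier R. rsat R (e(x := a)) \<phi>)"

definition elementary_substructure :: "'a set \<Rightarrow> ('a, 'b) ring_scheme \<Rightarrow> bool" where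
  "elementary_substructure S R \<longleftrightarrow> subring S R \<and>
     (\<forall>\<phi> e. (\<forall>n. e n \<in> S) \<longrightarrow> (rsat (R\<lparr>carrier := S\<rparr>) e \<phi> \<longleftrightarrow> rsat R e \<phi>))"

end

theory Submission
  imports Defs
begin

(* An element y of R0 lies in the ideal of R generated by g_1, ..., g_n in R0 exactly when R
   satisfies the formula "exists c_1 ... c_n. y = c_1 g_1 + ... + c_n g_n" with parameters y and
   the g_i. Elementarity lets us pick the coefficients in R0, so for finite F in R0 the trace on R0
   of the R-ideal generated by F lies in the R0-ideal generated by F. Given an ideal I of R0, the
   Noetherian ring R generates from I an ideal that is already generated by a finite F in I, and
   then I is contained in (Idl_R F) inter R0, which is contained in Idl_R0 F, which is contained
   in I. *)

primrec lin_comb :: "('a, 'b) ring_scheme \<Rightarrow> (nat \<Rightarrow> 'a) \<Rightarrow> (nat \<Rightarrow> 'a) \<Rightarrow> nat \<Rightarrow> 'a" where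
  "lin_comb R c g 0 = \<zero>\<^bsub>R\<^esub>"
| "lin_comb R c g (Suc n) = lin_comb R c g n \<oplus>\<^bsub>R\<^esub> c n \<otimes>\<^bsub>R\<^esub> g n"

lemma lin_comb_cong:
  "(\<And>i. i < n \<Longrightarrow> c i = c' i) \<Longrightarrow> (\<And>i. i < n \<Longrightarrow> g i = g' i) \<Longrightarrow>
   lin_comb R c g n = lin_comb R c' g' n"
  by (induction n) auto

lemma lin_comb_carrier_update [simp]: "lin_comb (R\<lparr>carrier := C\<rparr>) = lin_comb R"
proof (intro ext)
  show "lin_comb (R\<lparr>carrier := C\<rparr>) c g n = lin_comb R c g n" for c g n
    by (induction n) auto
qed

context ring
begin

lemma lin_comb_closed:
  "(\<And>i. i < n \<Longrightarrow> c i \<in> carrier R) \<Longrightarrow> (\<And>i. i < n \<Longrightarrow> g i \<in> carrier R) \<Longrightarrow>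
   lin_comb R c g n \<in> carrier R"
  by (induction n) auto

lemma lin_comb_in_ideal:
  assumes "ideal J R"
  shows "(\<And>i. i < n \<Longrightarrow> c i \<in> carrier R) \<Longrightarrow> (\<And>i. i < n \<Longrightarrow> g i \<in> J) \<Longrightarrow>
    lin_comb R c g n \<in> J"
  by (induction n)
    (auto intro: ideal.I_l_closed[OF assms] additive_subgroup.a_closed[OF ideal.axioms(1)[OF assms]]
      additive_subgroup.zero_closed[OF ideal.axioms(1)[OF assms]])

lemma lin_comb_add:
  assumes "\<And>i. i < n + m \<Longrightarrow> c i \<in> carrier R" "\<And>i. i < n + m \<Longrightarrow> g i \<in> carrier R"
  shows "lin_comb R c g (n + m) = lin_comb R c g n \<oplus> lin_comb R (\<lambda>i. c (n + i)) (\<lambda>i. g (n + i)) m"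
  using assms
proof (induction m)
  case (Suc m)
  then show ?case
    by (simp add: a_assoc lin_comb_closed)
qed (simp add: lin_comb_closed)

lemma lin_comb_minus:
  "(\<And>i. i < n \<Longrightarrow> c i \<in> carrier R) \<Longrightarrow> (\<And>i. i < n \<Longrightarrow> g i \<in> carrier R) \<Longrightarrow>
   \<ominus> lin_comb R c g n = lin_comb R (\<lambda>i. \<ominus> c i) g n"
  by (induction n) (simp_all add: minus_add l_minus lin_comb_closed)

lemma lin_comb_scale:
  "r \<in> carrier R \<Longrightarrow> (\<And>i. i < n \<Longrightarrow> c i \<in> carrier R) \<Longrightarrow> (\<And>i. i < n \<Longrightarrow> g i \<in> carrier R) \<Longrightarrow>
   r \<otimes> lin_comb R c g n = lin_comb R (\<lambda>i. r \<otimes> c i) g n"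
  by (induction n) (simp_all add: r_distr m_assoc lin_comb_closed)

end

definition lin_combs :: "('a, 'b) ring_scheme \<Rightarrow> 'a set \<Rightarrow> 'a set" where
  "lin_combs R S = {lin_comb R c g n | n c g. \<forall>i<n. c i \<in> carrier R \<and> g i \<in> S}"

lemma lin_combsI:
  "(\<And>i. i < n \<Longrightarrow> c i \<in> carrier R) \<Longrightarrow> (\<And>i. i < n \<Longrightarrow> g i \<in> S) \<Longrightarrow>
   lin_comb R c g n \<in> lin_combs R S"
  unfolding lin_combs_def by blast

lemma lin_combsE:
  assumes "y \<in> lin_combs R S"
  obtains n c g where "\<And>i. i < n \<Longrightarrow> c i \<in> carrier R" "\<And>i. i < n \<Longrightarrow> g i \<in> S"
    "y = lin_comb R c g n"
  using assms unfolding lin_combs_def by blast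

context cring
begin

lemma lin_combs_ideal:
  assumes "S \<subseteq> carrier R"
  shows "ideal (lin_combs R S) R"
proof (rule idealI[OF ring_axioms])
  have closed: "lin_combs R S \<subseteq> carrier R"
    using assms by (auto elim!: lin_combsE intro!: lin_comb_closed)
  show "subgroup (lin_combs R S) (add_monoid R)"
  proof (rule add.subgroupI)
    show "lin_combs R S \<subseteq> carrier R"
      by (fact closed)
    have "lin_comb R c g 0 \<in> lin_combs R S" for c g
      by (rule lin_combsI) auto
    then show "lin_combs R S \<noteq> {}"
      by blast
    show "\<ominus> y \<in> lin_combs R S" if "y \<in> lin_combs R S" for y
    proof -
      obtain n c g where c: "\<And>i. i < n \<Longrightarrow> c i \<in> carrier R" and g: "\<And>i. i < n \<Longrightarrow> g i \<in> S"
        and y: "y = lin_comb R c g n"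
        using \<open>y \<in> lin_combs R S\<close> by (elim lin_combsE) blast
      have "\<ominus> y = lin_comb R (\<lambda>i. \<ominus> c i) g n"
        unfolding y using c g assms by (intro lin_comb_minus) auto
      also have "\<dots> \<in> lin_combs R S"
        using c g by (intro lin_combsI) auto
      finally show ?thesis .
    qed
    show "y \<oplus> z \<in> lin_combs R S" if "y \<in> lin_combs R S" "z \<in> lin_combs R S" for y z
    proof -
      obtain n c g m c' g' where cg: "\<And>i. i < n \<Longrightarrow> c i \<in> carrier R" "\<And>i. i < n \<Longrightarrow> g i \<in> S"
        and cg': "\<And>i. i < m \<Longrightarrow> c' i \<in> carrier R" "\<And>i. i < m \<Longrightarrow> g' i \<in> S"
        and y: "y = lin_comb R c g n" and z: "z = lin_comb R c' g' m"
        using \<open>y \<in> lin_combs R S\<close> \<open>z \<in> lin_combs R S\<close> by (elim lin_combsE) blast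
      define C where "C i = (if i < n then c i else c' (i - n))" for i
      define G where "G i = (if i < n then g i else g' (i - n))" for i
      have C: "C i \<in> carrier R" and G: "G i \<in> S" if "i < n + m" for i
        using that cg cg' by (auto simp: C_def G_def)
      have "lin_comb R C G (n + m) = lin_comb R C G n \<oplus> lin_comb R (\<lambda>i. C (n + i)) (\<lambda>i. G (n + i)) m"
        using C G assms by (intro lin_comb_add) auto
      also have "lin_comb R C G n = y"
        unfolding y by (rule lin_comb_cong) (simp_all add: C_def G_def)
      also have "lin_comb R (\<lambda>i. C (n + i)) (\<lambda>i. G (n + i)) m = z"
        unfolding z by (rule lin_comb_cong) (simp_all add: C_def G_def)
      finally show ?thesis
        using lin_combsI[of "n + m" C R G S] C G by simp
    qed
  qed
  show l_closed: "x \<otimes> y \<in> lin_combs R S" if "y \<in> lin_combs R S" "x \<in> carrier R" for x y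
  proof -
    obtain n c g where c: "\<And>i. i < n \<Longrightarrow> c i \<in> carrier R" and g: "\<And>i. i < n \<Longrightarrow> g i \<in> S"
      and y: "y = lin_comb R c g n"
      using \<open>y \<in> lin_combs R S\<close> by (elim lin_combsE) blast
    have "x \<otimes> y = lin_comb R (\<lambda>i. x \<otimes> c i) g n"
      unfolding y using c g assms \<open>x \<in> carrier R\<close> by (intro lin_comb_scale) auto
    also have "\<dots> \<in> lin_combs R S"
      using c g \<open>x \<in> carrier R\<close> by (intro lin_combsI) auto
    finally show ?thesis .
  qed
  show "y \<otimes> x \<in> lin_combs R S" if "y \<in> lin_combs R S" "x \<in> carrier R" for x y
    using l_closed[OF that] m_comm[of y x] that closed by auto
qed

lemma genideal_eq_lin_combs:
  assumes "S \<subseteq> carrier R"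
  shows "Idl S = lin_combs R S"
proof
  have "s \<in> lin_combs R S" if "s \<in> S" for s
  proof -
    have "s = lin_comb R (\<lambda>_. \<one>) (\<lambda>_. s) 1"
      using that assms by auto
    then show ?thesis
      using lin_combsI[of 1 "\<lambda>_. \<one>" R "\<lambda>_. s" S] that by simp
  qed
  then show "Idl S \<subseteq> lin_combs R S"
    by (intro genideal_minimal lin_combs_ideal assms) blast
  show "lin_combs R S \<subseteq> Idl S"
    using assms genideal_self[OF assms]
    by (auto elim!: lin_combsE intro!: lin_comb_in_ideal genideal_ideal)
qed

lemma genideal_finite_subset:
  assumes "S \<subseteq> carrier R" "y \<in> Idl S"
  obtains F where "F \<subseteq> S" "finite F" "y \<in> Idl F"
proof -
  have "y \<in> lin_combs R S"
    using assms genideal_eq_lin_combs by blast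
  then obtain n c g where c: "\<And>i. i < n \<Longrightarrow> c i \<in> carrier R" and g: "\<And>i. i < n \<Longrightarrow> g i \<in> S"
    and y: "y = lin_comb R c g n"
    by (elim lin_combsE) blast
  have F: "g ` {..<n} \<subseteq> S"
    using g by blast
  then have "y \<in> lin_combs R (g ` {..<n})"
    unfolding y using c by (intro lin_combsI) auto
  then have "y \<in> Idl (g ` {..<n})"
    using F assms(1) genideal_eq_lin_combs[of "g ` {..<n}"] by auto
  then show ?thesis
    using that F by blast
qed

lemma noetherian_genideal_finite_subset:
  assumes "noetherian_ring R" "S \<subseteq> carrier R"
  obtains F where "F \<subseteq> S" "finite F" "Idl S = Idl F"
proof -
  obtain A where A: "A \<subseteq> carrier R" "finite A" "Idl S = Idl A"
    using noetherian_ring.finetely_gen[OF assms(1) genideal_ideal[OF assms(2)]] by blast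
  have "\<exists>F. F \<subseteq> S \<and> finite F \<and> a \<in> Idl F" if "a \<in> A" for a
  proof -
    have "a \<in> Idl S"
      using that A(3) genideal_self[OF A(1)] by blast
    then obtain F where "F \<subseteq> S" "finite F" "a \<in> Idl F"
      by (rule genideal_finite_subset[OF assms(2)])
    then show ?thesis
      by blast
  qed
  then obtain F where F: "\<And>a. a \<in> A \<Longrightarrow> F a \<subseteq> S \<and> finite (F a) \<and> a \<in> Idl (F a)"
    by metis
  define G where "G = (\<Union>a\<in>A. F a)"
  have G: "G \<subseteq> S" "finite G"
    using F A(2) by (auto simp: G_def)
  have "A \<subseteq> Idl G"
  proof
    fix a assume "a \<in> A"
    then have "Idl (F a) \<subseteq> Idl G"
      using G(1) assms(2) by (intro subset_Idl_subset) (auto simp: G_def)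
    then show "a \<in> Idl G"
      using F[OF \<open>a \<in> A\<close>] by blast
  qed
  then have "Idl S \<subseteq> Idl G"
    unfolding A(3) using A(1) G(1) assms(2) by (subst Idl_subset_ideal[OF genideal_ideal]) auto
  moreover have "Idl G \<subseteq> Idl S"
    using G(1) assms(2) by (rule subset_Idl_subset[rotated])
  ultimately show ?thesis
    using that G by blast
qed

end

primrec lin_comb_term :: "(nat \<Rightarrow> nat) \<Rightarrow> (nat \<Rightarrow> nat) \<Rightarrow> nat \<Rightarrow> rterm" where
  "lin_comb_term c g 0 = RZero"
| "lin_comb_term c g (Suc n) = RAdd (lin_comb_term c g n) (RMul (RVar (c n)) (RVar (g n)))"

lemma rterm_eval_lin_comb_term [simp]:
  "rterm_eval R e (lin_comb_term c g n) = lin_comb R (e \<circ> c) (e \<circ> g) n"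
  by (induction n) auto

lemma rsat_foldr_RExists:
  "rsat R e (foldr RExists vs \<phi>) \<longleftrightarrow>
   (\<exists>x. (\<forall>v\<in>set vs. x v \<in> carrier R) \<and> rsat R (override_on e x (set vs)) \<phi>)"
proof (induction vs arbitrary: e)
  case (Cons v vs)
  show ?case
  proof
    assume "rsat R e (foldr RExists (v # vs) \<phi>)"
    then obtain b where b: "b \<in> carrier R" and "rsat R (e(v := b)) (foldr RExists vs \<phi>)"
      by auto
    then obtain x where x: "\<forall>w\<in>set vs. x w \<in> carrier R"
      and sat: "rsat R (override_on (e(v := b)) x (set vs)) \<phi>"
      using Cons.IH by blast
    define x' where "x' w = (if w \<in> set vs then x w else b)" for w
    have "override_on (e(v := b)) x (set vs) = override_on e x' (set (v # vs))"
      by (auto simp: override_on_def x'_def)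
    then show "\<exists>x. (\<forall>w\<in>set (v # vs). x w \<in> carrier R) \<and> rsat R (override_on e x (set (v # vs))) \<phi>"
      using b x sat by (intro exI[of _ x']) (auto simp: x'_def)
  next
    assume "\<exists>x. (\<forall>w\<in>set (v # vs). x w \<in> carrier R) \<and> rsat R (override_on e x (set (v # vs))) \<phi>"
    then obtain x where x: "\<forall>w\<in>set (v # vs). x w \<in> carrier R"
      and sat: "rsat R (override_on e x (set (v # vs))) \<phi>"
      by blast
    have "override_on e x (set (v # vs)) = override_on (e(v := x v)) x (set vs)"
      by (auto simp: override_on_def)
    with sat have "rsat R (override_on (e(v := x v)) x (set vs)) \<phi>"
      by simp
    then have "rsat R (e(v := x v)) (foldr RExists vs \<phi>)"
      unfolding Cons.IH using x by (intro exI[of _ x] conjI) simp_all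
    then show "rsat R e (foldr RExists (v # vs) \<phi>)"
      using x by (auto intro!: bexI[of _ "x v"])
  qed
qed simp

text \<open>Variable 0 holds the element, variable \<open>2 * i + 1\<close> the \<open>i\<close>-th generator, and the
  existentially bound variable \<open>2 * i + 2\<close> its coefficient.\<close>

definition lin_comb_formula :: "nat \<Rightarrow> rform" where
  "lin_comb_formula n = foldr RExists (map (\<lambda>i. 2 * i + 2) [0..<n])
     (REq (RVar 0) (lin_comb_term (\<lambda>i. 2 * i + 2) (\<lambda>i. 2 * i + 1) n))"

lemma rsat_lin_comb_formula:
  "rsat R e (lin_comb_formula n) \<longleftrightarrow>
   (\<exists>c. (\<forall>i<n. c i \<in> carrier R) \<and> e 0 = lin_comb R c (\<lambda>i. e (2 * i + 1)) n)"
proof -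
  let ?V = "(\<lambda>i. 2 * i + 2) ` {..<n}"
  have "set (map (\<lambda>i. 2 * i + 2) [0..<n]) = ?V"
    by auto
  moreover have "override_on e x ?V 0 = e 0" for x
    by (auto simp: override_on_def)
  moreover have "lin_comb R (override_on e x ?V \<circ> (\<lambda>i. 2 * i + 2)) (override_on e x ?V \<circ> (\<lambda>i. 2 * i + 1)) n
      = lin_comb R (\<lambda>i. x (2 * i + 2)) (\<lambda>i. e (2 * i + 1)) n" for x
    by (rule lin_comb_cong) (auto simp: override_on_def, presburger)
  ultimately have "rsat R e (lin_comb_formula n) \<longleftrightarrow>
      (\<exists>x. (\<forall>v\<in>?V. x v \<in> carrier R) \<and> e 0 = lin_comb R (\<lambda>i. x (2 * i + 2)) (\<lambda>i. e (2 * i + 1)) n)"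
    by (simp add: lin_comb_formula_def rsat_foldr_RExists)
  also have "\<dots> \<longleftrightarrow> (\<exists>c. (\<forall>i<n. c i \<in> carrier R) \<and> e 0 = lin_comb R c (\<lambda>i. e (2 * i + 1)) n)"
  proof
    assume "\<exists>c. (\<forall>i<n. c i \<in> carrier R) \<and> e 0 = lin_comb R c (\<lambda>i. e (2 * i + 1)) n"
    then obtain c where "\<forall>i<n. c i \<in> carrier R" "e 0 = lin_comb R c (\<lambda>i. e (2 * i + 1)) n"
      by blast
    then show "\<exists>x. (\<forall>v\<in>?V. x v \<in> carrier R) \<and> e 0 = lin_comb R (\<lambda>i. x (2 * i + 2)) (\<lambda>i. e (2 * i + 1)) n"
      by (intro exI[of _ "\<lambda>v. c ((v - 2) div 2)"]) auto
  next
    assume "\<exists>x. (\<forall>v\<in>?V. x v \<in> carrier R) \<and> e 0 = lin_comb R (\<lambda>i. x (2 * i + 2)) (\<lambda>i. e (2 * i + 1)) n"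
    then obtain x where "\<forall>v\<in>?V. x v \<in> carrier R" "e 0 = lin_comb R (\<lambda>i. x (2 * i + 2)) (\<lambda>i. e (2 * i + 1)) n"
      by blast
    then show "\<exists>c. (\<forall>i<n. c i \<in> carrier R) \<and> e 0 = lin_comb R c (\<lambda>i. e (2 * i + 1)) n"
      by (intro exI[of _ "\<lambda>i. x (2 * i + 2)"]) auto
  qed
  finally show ?thesis .
qed

lemma elementary_substructure_lin_comb:
  assumes "elementary_substructure R0 R" "y \<in> R0"
    and "\<And>i. i < n \<Longrightarrow> c i \<in> carrier R" "\<And>i. i < n \<Longrightarrow> g i \<in> R0"
    and "y = lin_comb R c g n"
  obtains c' where "\<And>i. i < n \<Longrightarrow> c' i \<in> R0" "y = lin_comb R c' g n"
proof -
  \<comment> \<open>The whole assignment must take values in \<open>R0\<close>; unused variables get the value \<open>y\<close>.\<close>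
  define e where "e k = (if odd k \<and> k div 2 < n then g (k div 2) else y)" for k
  have e_in: "e k \<in> R0" for k
    using assms(2,4) by (simp add: e_def)
  have e_gen: "lin_comb S d (\<lambda>i. e (2 * i + 1)) n = lin_comb S d g n" for S :: "('a, 'b) ring_scheme" and d
    by (rule lin_comb_cong) (simp_all add: e_def)
  have "e 0 = y"
    by (simp add: e_def)
  then have "rsat R e (lin_comb_formula n)"
    unfolding rsat_lin_comb_formula e_gen using assms(3,5) by blast
  then have "rsat (R\<lparr>carrier := R0\<rparr>) e (lin_comb_formula n)"
    using assms(1) e_in unfolding elementary_substructure_def by blast
  then show ?thesis
    unfolding rsat_lin_comb_formula e_gen using that \<open>e 0 = y\<close> by auto
qed

lemma genideal_elementary_substructure:
  assumes "cring R" "elementary_substructure R0 R" "S \<subseteq> R0"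
  shows "Idl\<^bsub>R\<^esub> S \<inter> R0 \<subseteq> Idl\<^bsub>R\<lparr>carrier := R0\<rparr>\<^esub> S"
proof
  interpret cring R by fact
  have sub: "subring R0 R"
    using assms(2) by (simp add: elementary_substructure_def)
  interpret R0: ring "R\<lparr>carrier := R0\<rparr>"
    by (rule subring_is_ring[OF sub])
  have "R0 \<subseteq> carrier R"
    using sub by (rule subringE)
  with assms(3) have S: "S \<subseteq> carrier R" by blast
  fix y assume y: "y \<in> Idl\<^bsub>R\<^esub> S \<inter> R0"
  then have "y \<in> lin_combs R S"
    using genideal_eq_lin_combs[OF S] by blast
  then obtain n c g where c: "\<And>i. i < n \<Longrightarrow> c i \<in> carrier R" and g: "\<And>i. i < n \<Longrightarrow> g i \<in> S"
    and "y = lin_comb R c g n"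
    by (elim lin_combsE) blast
  moreover have "y \<in> R0" "\<And>i. i < n \<Longrightarrow> g i \<in> R0"
    using y g assms(3) by auto
  ultimately obtain c' where c': "\<And>i. i < n \<Longrightarrow> c' i \<in> R0" and "y = lin_comb R c' g n"
    using elementary_substructure_lin_comb[OF assms(2), of y n c g] c by blast
  then have "y = lin_comb (R\<lparr>carrier := R0\<rparr>) c' g n"
    by simp
  also have "\<dots> \<in> Idl\<^bsub>R\<lparr>carrier := R0\<rparr>\<^esub> S"
    using R0.genideal_self[of S] assms(3) c' g
    by (intro R0.lin_comb_in_ideal[OF R0.genideal_ideal]) auto
  finally show "y \<in> Idl\<^bsub>R\<lparr>carrier := R0\<rparr>\<^esub> S" .
qed

theorem proposition7p12:
  fixes R :: "('a, 'b) ring_scheme" and R0 :: "'a set"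
  assumes "cring R" and "noetherian_ring R"
    and "elementary_substructure R0 R"
  shows "noetherian_ring (R\<lparr>carrier := R0\<rparr>)"
proof -
  interpret cring R by fact
  have sub: "subring R0 R"
    using assms(3) by (simp add: elementary_substructure_def)
  interpret R0: ring "R\<lparr>carrier := R0\<rparr>"
    by (rule subring_is_ring[OF sub])
  show ?thesis
  proof (rule R0.noetherian_ringI)
    fix I assume I: "ideal I (R\<lparr>carrier := R0\<rparr>)"
    have "I \<subseteq> R0"
      using ideal.Icarr[OF I] by auto
    moreover have "R0 \<subseteq> carrier R"
      using sub by (rule subringE)
    ultimately have "I \<subseteq> carrier R"
      by blast
    then obtain F where F: "F \<subseteq> I" "finite F" "Idl\<^bsub>R\<^esub> I = Idl\<^bsub>R\<^esub> F"
      by (rule noetherian_genideal_finite_subset[OF assms(2)])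
    have "I \<subseteq> Idl\<^bsub>R\<^esub> F \<inter> R0"
      using genideal_self \<open>I \<subseteq> R0\<close> \<open>R0 \<subseteq> carrier R\<close> F(3) by blast
    also have "\<dots> \<subseteq> Idl\<^bsub>R\<lparr>carrier := R0\<rparr>\<^esub> F"
      using F(1) \<open>I \<subseteq> R0\<close> by (intro genideal_elementary_substructure assms) auto
    finally have "I = Idl\<^bsub>R\<lparr>carrier := R0\<rparr>\<^esub> F"
      using R0.genideal_minimal[OF I F(1)] by blast
    then show "\<exists>A \<subseteq> carrier (R\<lparr>carrier := R0\<rparr>). finite A \<and> I = Idl\<^bsub>R\<lparr>carrier := R0\<rparr>\<^esub> A"
      using F(1,2) \<open>I \<subseteq> R0\<close> by (intro exI[of _ F]) auto
  qed
qed

end
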